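(* Let $n\ge1$ and $\mathbf{x}\in\{0,1\}^n$. Let $\omega=\omega(\mathbf{x}')$, let $m$ be the number of 1-runs in $\mathbf{x}'$ and $m_1$ the number of these of length $1$. For $j=0,1,2,3,4$ let $A_j$ be the number of $\mathbf{y}\in\Phi_2(\mathbf{x})$ with $\omega(\mathbf{y}')=\omega-j$. Then (a) $A_0+A_1=1+m+\binom{m}{2}$; (b) $A_2+A_3=(\omega-m)(m+1)-(m-m_1)$; (c) $A_4=\binom{\omega-m}{2}-(\omega-m)+(m-m_1)$.
   Context: A grain pattern of length $n$ is a subset $E\subseteq\{2,\dots,n\}$ containing no two consecutive integers. For such $E$, $\phi_E:\{0,1\}^n\to\{0,1\}^n$ sends $\mathbf{x}=(x_1,\dots,x_n)$ to $\mathbf{y}$ with $y_j=x_{j-1}$ if $j\in E$ and $y_j=x_j$ otherwise. $\Phi_t(\mathbf{x})=\{\phi_E(\mathbf{x}): E \text{ a grain pattern of length } n,\ |E|\le t\}$ (a set). The derivative sequence of $\mathbf{x}$ is $\mathbf{x}'=(x'_2,\dots,x'_n)$ with $x'_j=x_{j-1}\oplus x_j$ (mod 2); $\omega(\cdot)$ is Hamming weight; a 1-run of $\mathbf{x}'$ is a maximal block of consecutive 1s. Binomial coefficients $\binom{a}{b}$ are $0$ when $b>a\ge0$. *)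

theory Defs
  imports Main
begin

text \<open>Binary words x in {0,1}^n are represented as bool lists of length n;
  coordinate x_j (1-based, 1 \<le> j \<le> n) is  x ! (j - 1).\<close>

definition bit :: "bool list \<Rightarrow> nat \<Rightarrow> bool" where
  "bit x j = x ! (j - 1)"

definition grain_pattern :: "nat \<Rightarrow> nat set \<Rightarrow> bool" where
  "grain_pattern n E \<longleftrightarrow> E \<subseteq> {2..n} \<and> (\<forall>j\<in>E. Suc j \<notin> E)"

definition phi :: "nat set \<Rightarrow> bool list \<Rightarrow> bool list" where
  "phi E x = map (\<lambda>j. if j \<in> E then bit x (j - 1) else bit x j) [1..<length x + 1]"

definition Phi :: "nat \<Rightarrow> bool list \<Rightarrow> bool list set" where
  "Phi t x = {phi E x | E. grain_pattern (length x) E \<and> card E \<le> t}"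

definition deriv :: "bool list \<Rightarrow> bool list" where
  "deriv x = map (\<lambda>j. bit x (j - 1) \<noteq> bit x j) [2..<length x + 1]"

definition weight :: "bool list \<Rightarrow> nat" where
  "weight y = length (filter id y)"

text \<open>1-runs: maximal blocks of consecutive 1s, identified by their starting index.\<close>
definition run_starts :: "bool list \<Rightarrow> nat set" where
  "run_starts y = {i. i < length y \<and> y ! i \<and> (i = 0 \<or> \<not> y ! (i - 1))}"

definition num_runs :: "bool list \<Rightarrow> nat" where
  "num_runs y = card (run_starts y)"

definition num_runs_len1 :: "bool list \<Rightarrow> nat" where
  "num_runs_len1 y = card {i \<in> run_starts y. Suc i = length y \<or> \<not> y ! Suc i}"

end

theory Submission
  imports Defs
begin

(* The shift phi_E acts only through E \<inter> P, where P \<subseteq> {2..n} is the support of x', and it is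
   injective on subsets of P; so Phi_2(x) corresponds to the non-adjacent subsets E \<subseteq> P with
   |E| \<le> 2. Shifting at e \<in> P clears x'_e and complements x'_(e+1), so the weight drops by 2 if
   e + 1 \<in> P, by 1 if e = n, and by 0 otherwise. With D the elements of P whose successor lies
   in P, the total drop is 2 |E \<inter> D| + [n \<in> E], so A_(2k) + A_(2k+1), and A_4 for k = 2, count
   the patterns meeting D in k points. Without the non-adjacency condition these are
   C(|D|, k) times the number of subsets of P - D of size at most 2 - k, where |P - D| = m and
   |D| = \<omega> - m. The adjacent pairs {d, d + 1} to be removed number m - m1 for k = 1 (one per run
   of length at least 2) and |D| - (m - m1) for k = 2. *)

definition nonadj :: "nat set \<Rightarrow> bool" where
  "nonadj E \<longleftrightarrow> (\<forall>j\<in>E. Suc j \<notin> E)"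

definition run_nonends :: "nat set \<Rightarrow> nat set" where
  "run_nonends P = {e \<in> P. Suc e \<in> P}"

lemma card_run_ends_eq_card_run_starts:
  assumes "finite S" and "0 \<notin> S"
  shows "card {e \<in> S. Suc e \<notin> S} = card {e \<in> S. e - 1 \<notin> S}"
proof -
  have "Suc ` {e \<in> S. Suc e \<in> S} = {e \<in> S. e - 1 \<in> S}"
  proof (intro equalityI subsetI)
    fix e assume e: "e \<in> {e \<in> S. e - 1 \<in> S}"
    then have "e = Suc (e - 1)" using assms(2) by (cases e) auto
    with e show "e \<in> Suc ` {e \<in> S. Suc e \<in> S}" by (intro image_eqI[where x = "e - 1"]) auto
  qed auto
  then have "card {e \<in> S. Suc e \<in> S} = card {e \<in> S. e - 1 \<in> S}"
    using card_image[OF inj_Suc] by metis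
  moreover have "card S = card {e \<in> S. Suc e \<in> S} + card {e \<in> S. Suc e \<notin> S}"
    "card S = card {e \<in> S. e - 1 \<in> S} + card {e \<in> S. e - 1 \<notin> S}"
    using card_Int_Diff[OF assms(1), of "{e. Suc e \<in> S}"] card_Int_Diff[OF assms(1), of "{e. e - 1 \<in> S}"]
    by (simp_all add: Int_def set_diff_eq)
  ultimately show ?thesis by linarith
qed

lemma card_subsets_card_le:
  assumes "finite S"
  shows "card {B. B \<subseteq> S \<and> card B \<le> k} = (\<Sum>i\<le>k. card S choose i)"
proof (induction k)
  case 0
  have "{B. B \<subseteq> S \<and> card B \<le> 0} = {B. B \<subseteq> S \<and> card B = 0}" by simp
  then show ?case using n_subsets[OF assms, of 0] by simp
next
  case (Suc k)
  have fin: "finite {B. B \<subseteq> S \<and> P B}" for P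
    using assms by (rule rev_finite_subset[OF finite_Pow_iff[THEN iffD2]]) auto
  have "{B. B \<subseteq> S \<and> card B \<le> Suc k} = {B. B \<subseteq> S \<and> card B \<le> k} \<union> {B. B \<subseteq> S \<and> card B = Suc k}"
    by auto
  then have "card {B. B \<subseteq> S \<and> card B \<le> Suc k}
      = card {B. B \<subseteq> S \<and> card B \<le> k} + card {B. B \<subseteq> S \<and> card B = Suc k}"
    by (simp add: card_Un_disjoint[OF fin fin] disjoint_iff)
  then show ?case using Suc n_subsets[OF assms] by simp
qed

lemma card_subsets_split:
  assumes "finite P" and "D \<subseteq> P"
  shows "card {E. E \<subseteq> P \<and> Q1 (E \<inter> D) \<and> Q2 (E - D)}
    = card {A. A \<subseteq> D \<and> Q1 A} * card {B. B \<subseteq> P - D \<and> Q2 B}"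
proof -
  have parts: "(A \<union> B) \<inter> D = A" "(A \<union> B) - D = B" if "A \<subseteq> D" "B \<subseteq> P - D" for A B
    using that by auto
  have "bij_betw (\<lambda>E. (E \<inter> D, E - D)) {E. E \<subseteq> P \<and> Q1 (E \<inter> D) \<and> Q2 (E - D)}
      ({A. A \<subseteq> D \<and> Q1 A} \<times> {B. B \<subseteq> P - D \<and> Q2 B})"
    by (rule bij_betw_byWitness[where f' = "\<lambda>(A, B). A \<union> B"]) (use assms(2) parts in auto)
  then show ?thesis by (simp add: bij_betw_same_card card_cartesian_product)
qed

lemma card_nonadj_filter:
  assumes "finite U" and "\<And>E. E \<in> U \<Longrightarrow> finite E \<and> card E \<le> 2"
  shows "card {E \<in> U. nonadj E} + card {d. {d, Suc d} \<in> U} = card U"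
proof -
  have "{E \<in> U. \<not> nonadj E} = (\<lambda>d. {d, Suc d}) ` {d. {d, Suc d} \<in> U}"
  proof (intro equalityI subsetI)
    fix E assume "E \<in> {E \<in> U. \<not> nonadj E}"
    then obtain d where "d \<in> E" "Suc d \<in> E" "E \<in> U" by (auto simp: nonadj_def)
    moreover then have "{d, Suc d} = E"
      using assms(2)[of E] card_mono[of E "{d, Suc d}"] by (intro card_subset_eq) auto
    ultimately show "E \<in> (\<lambda>d. {d, Suc d}) ` {d. {d, Suc d} \<in> U}" by auto
  qed (auto simp: nonadj_def)
  moreover have "inj_on (\<lambda>d. {d, Suc d}) A" for A
    by (rule inj_onI) (auto simp: doubleton_eq_iff)
  ultimately have "card {E \<in> U. \<not> nonadj E} = card {d. {d, Suc d} \<in> U}"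
    by (simp add: card_image)
  then show ?thesis
    using card_Int_Diff[OF assms(1), of "Collect nonadj"] by (simp add: Int_def set_diff_eq)
qed

lemma card_run_starts_split:
  assumes "finite P" and "0 \<notin> P"
  defines "D \<equiv> run_nonends P"
  shows "card {e \<in> P. e - 1 \<notin> P}
    = card {e \<in> P. e - 1 \<notin> P \<and> Suc e \<notin> P} + card {d \<in> D. Suc d \<notin> D}"
proof -
  have "Suc (e - 1) = e" if "e \<in> P" for e
    using that assms(2) by (cases e) auto
  then have "{e \<in> P. e - 1 \<notin> P \<and> Suc e \<in> P} = {e \<in> D. e - 1 \<notin> D}"
    by (auto simp: D_def run_nonends_def)
  moreover have "card {e \<in> D. Suc e \<notin> D} = card {e \<in> D. e - 1 \<notin> D}"
    using assms(1,2) by (intro card_run_ends_eq_card_run_starts) (auto simp: D_def run_nonends_def)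
  moreover have "card {e \<in> P. e - 1 \<notin> P}
      = card {e \<in> P. e - 1 \<notin> P \<and> Suc e \<notin> P} + card {e \<in> P. e - 1 \<notin> P \<and> Suc e \<in> P}"
    using assms(1) card_Int_Diff[of "{e \<in> P. e - 1 \<notin> P}" "{e. Suc e \<notin> P}"]
    by (simp add: Int_def set_diff_eq conj_ac)
  ultimately show ?thesis by simp
qed

definition nonadj_subsets_le2 :: "nat set \<Rightarrow> nat set set" where
  "nonadj_subsets_le2 P = {E. E \<subseteq> P \<and> nonadj E \<and> card E \<le> 2}"

lemma card_nonadj_subsets_le2_by_nonends:
  assumes "finite P" and "j \<le> 2"
  defines "D \<equiv> run_nonends P"
  shows "card {E \<in> nonadj_subsets_le2 P. card (E \<inter> D) = j} + card {d \<in> D. card ({d, Suc d} \<inter> D) = j}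
    = (card D choose j) * (\<Sum>i\<le>2 - j. card (P - D) choose i)"
proof -
  let ?F = "{E. E \<subseteq> P \<and> card (E \<inter> D) = j \<and> card (E - D) \<le> 2 - j}"
  have D_sub: "D \<subseteq> P" by (auto simp: D_def run_nonends_def)
  have fin: "finite D" "finite ?F"
    using assms(1) D_sub finite_subset by (auto intro: rev_finite_subset[of "Pow P"])
  have card_E: "card E = card (E \<inter> D) + card (E - D)" if "E \<subseteq> P" for E
    using card_Int_Diff finite_subset[OF that assms(1)] by blast
  have members: "finite E \<and> card E \<le> 2" if "E \<in> ?F" for E
    using that card_E[of E] assms(1,2) finite_subset by auto
  have "card ?F = (card D choose j) * (\<Sum>i\<le>2 - j. card (P - D) choose i)"
    using card_subsets_split[OF assms(1) D_sub, of "\<lambda>A. card A = j" "\<lambda>B. card B \<le> 2 - j"]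
      n_subsets[OF fin(1)] card_subsets_card_le[of "P - D"] assms(1) by simp
  moreover have "{E \<in> ?F. nonadj E} = {E \<in> nonadj_subsets_le2 P. card (E \<inter> D) = j}"
    using card_E assms(2) by (auto simp: nonadj_subsets_le2_def)
  moreover have "{d. {d, Suc d} \<in> ?F} = {d \<in> D. card ({d, Suc d} \<inter> D) = j}"
  proof -
    have "{d, Suc d} \<subseteq> P \<longleftrightarrow> d \<in> D" for d
      by (auto simp: D_def run_nonends_def)
    moreover have "card ({d, Suc d} - D) = 2 - card ({d, Suc d} \<inter> D)" if "d \<in> D" for d
      using card_E[of "{d, Suc d}"] that unfolding D_def run_nonends_def by auto
    ultimately show ?thesis by auto
  qed
  ultimately show ?thesis using card_nonadj_filter[OF fin(2) members] by simp
qed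

lemma card_nonadj_subsets_le2_levels:
  assumes "finite P"
  defines "D \<equiv> run_nonends P"
  shows "card {E \<in> nonadj_subsets_le2 P. card (E \<inter> D) = 0} = 1 + card (P - D) + (card (P - D) choose 2)"
    and "card {E \<in> nonadj_subsets_le2 P. card (E \<inter> D) = 1} + card {d \<in> D. Suc d \<notin> D}
      = card D * (card (P - D) + 1)"
    and "card {E \<in> nonadj_subsets_le2 P. card (E \<inter> D) = 2} + card {d \<in> D. Suc d \<in> D}
      = card D choose 2"
proof -
  have "card ({d, Suc d} \<inter> D) = (if Suc d \<in> D then 2 else 1)" if "d \<in> D" for d
    using that by (cases "Suc d \<in> D") (auto simp: Int_insert_left)
  then have "{d \<in> D. card ({d, Suc d} \<inter> D) = 0} = {}"
    "{d \<in> D. card ({d, Suc d} \<inter> D) = 1} = {d \<in> D. Suc d \<notin> D}"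
    "{d \<in> D. card ({d, Suc d} \<inter> D) = 2} = {d \<in> D. Suc d \<in> D}"
    by (auto split: if_splits)
  note levels = this[THEN arg_cong[where f = card]]
  show "card {E \<in> nonadj_subsets_le2 P. card (E \<inter> D) = 0} = 1 + card (P - D) + (card (P - D) choose 2)"
    using card_nonadj_subsets_le2_by_nonends[OF assms(1), of 0] levels(1)
    by (simp add: D_def numeral_2_eq_2)
  show "card {E \<in> nonadj_subsets_le2 P. card (E \<inter> D) = 1} + card {d \<in> D. Suc d \<notin> D}
      = card D * (card (P - D) + 1)"
    using card_nonadj_subsets_le2_by_nonends[OF assms(1), of 1] levels(2)
    by (simp add: D_def)
  show "card {E \<in> nonadj_subsets_le2 P. card (E \<inter> D) = 2} + card {d \<in> D. Suc d \<in> D}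
      = card D choose 2"
    using card_nonadj_subsets_le2_by_nonends[OF assms(1), of 2] levels(3)
    by (simp add: D_def)
qed

lemma card_level_pair:
  assumes "finite S" and "\<And>E. b E \<le> (1::nat)"
  shows "card {E \<in> S. 2 * k E + b E = 2 * j} + card {E \<in> S. 2 * k E + b E = 2 * j + 1}
    = card {E \<in> S. k E = j}"
proof -
  have "k E = j \<longleftrightarrow> 2 * k E + b E = 2 * j \<or> 2 * k E + b E = 2 * j + 1" for E
    using assms(2)[of E] by arith
  then have "{E \<in> S. k E = j} = {E \<in> S. 2 * k E + b E = 2 * j} \<union> {E \<in> S. 2 * k E + b E = 2 * j + 1}"
    by auto
  then show ?thesis using assms(1) by (simp add: card_Un_disjoint disjoint_iff)
qed

lemma card_shift_preimage:
  fixes S :: "nat set"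
  assumes "\<forall>e\<in>S. k \<le> e"
  shows "card {i. i + k \<in> S} = card S"
proof -
  have "S = (\<lambda>i. i + k) ` {i. i + k \<in> S}"
  proof (intro equalityI subsetI)
    fix e assume "e \<in> S"
    moreover from this assms have "e = (e - k) + k" by simp
    ultimately show "e \<in> (\<lambda>i. i + k) ` {i. i + k \<in> S}" by (intro image_eqI[where x = "e - k"]) auto
  qed auto
  then show ?thesis by (metis card_image inj_on_add')
qed

definition deriv_support :: "bool list \<Rightarrow> nat set" where
  "deriv_support x = {j \<in> {2..length x}. bit x (j - 1) \<noteq> bit x j}"

lemma deriv_support_subset: "deriv_support x \<subseteq> {2..length x}"
  by (auto simp: deriv_support_def)

lemma finite_deriv_support: "finite (deriv_support x)"
  using deriv_support_subset finite_subset by blast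

lemma deriv_nth_iff: "i < length (deriv x) \<and> deriv x ! i \<longleftrightarrow> i + 2 \<in> deriv_support x"
  by (auto simp: deriv_def deriv_support_def simp del: upt_Suc)

lemma weight_deriv: "weight (deriv x) = card (deriv_support x)"
proof -
  have "weight (deriv x) = card {i. i + 2 \<in> deriv_support x}"
    by (simp add: weight_def length_filter_conv_card deriv_nth_iff)
  also have "\<dots> = card (deriv_support x)"
    by (rule card_shift_preimage) (use deriv_support_subset[of x] in auto)
  finally show ?thesis .
qed

lemma run_starts_deriv:
  "run_starts (deriv x) = {i. i + 2 \<in> deriv_support x \<and> i + 1 \<notin> deriv_support x}"
proof -
  have "deriv x ! (i - 1) \<longleftrightarrow> i + 1 \<in> deriv_support x"
    if "i < length (deriv x)" "i \<noteq> 0" for i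
    using that deriv_nth_iff[of "i - 1" x] by auto
  moreover have "1 \<notin> deriv_support x" using deriv_support_subset[of x] by auto
  ultimately show ?thesis
    unfolding run_starts_def using deriv_nth_iff[of _ x] by auto
qed

lemma num_runs_deriv:
  "num_runs (deriv x) = card {e \<in> deriv_support x. e - 1 \<notin> deriv_support x}"
  using deriv_support_subset[of x]
  by (subst card_shift_preimage[symmetric, where k = 2]) (auto simp: num_runs_def run_starts_deriv)

lemma num_runs_len1_deriv:
  "num_runs_len1 (deriv x)
    = card {e \<in> deriv_support x. e - 1 \<notin> deriv_support x \<and> Suc e \<notin> deriv_support x}"
proof -
  have "(Suc i = length (deriv x) \<or> \<not> deriv x ! Suc i) \<longleftrightarrow> Suc i + 2 \<notin> deriv_support x"
    if "i \<in> run_starts (deriv x)" for i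
  proof -
    have "i < length (deriv x)" using that by (simp add: run_starts_def)
    then show ?thesis using deriv_nth_iff[of "Suc i" x] by auto
  qed
  then show ?thesis
    using deriv_support_subset[of x] unfolding num_runs_len1_def
    by (subst card_shift_preimage[symmetric, where k = 2]) (auto simp: run_starts_deriv intro!: arg_cong[where f = card])
qed

lemma zero_notin_deriv_support: "0 \<notin> deriv_support x"
  using deriv_support_subset[of x] by auto

lemma num_runs_deriv_eq_card_run_ends:
  "num_runs (deriv x) = card (deriv_support x - run_nonends (deriv_support x))"
proof -
  have "deriv_support x - run_nonends (deriv_support x) = {e \<in> deriv_support x. Suc e \<notin> deriv_support x}"
    by (auto simp: run_nonends_def)
  then show ?thesis
    using card_run_ends_eq_card_run_starts[OF finite_deriv_support zero_notin_deriv_support]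
    by (simp add: num_runs_deriv)
qed

lemma num_runs_deriv_split:
  "num_runs (deriv x) = num_runs_len1 (deriv x)
    + card {d \<in> run_nonends (deriv_support x). Suc d \<notin> run_nonends (deriv_support x)}"
  using card_run_starts_split[OF finite_deriv_support zero_notin_deriv_support]
  by (simp add: num_runs_deriv num_runs_len1_deriv)

lemma length_phi [simp]: "length (phi E x) = length x"
  by (simp add: phi_def del: upt_Suc)

lemma bit_phi:
  "1 \<le> j \<Longrightarrow> j \<le> length x \<Longrightarrow> bit (phi E x) j = (if j \<in> E then bit x (j - 1) else bit x j)"
  unfolding phi_def bit_def by (simp add: nth_map nth_upt del: upt_Suc)

lemma phi_eqI:
  assumes "\<And>j. 1 \<le> j \<Longrightarrow> j \<le> length x \<Longrightarrow> bit (phi E x) j = bit (phi F x) j"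
  shows "phi E x = phi F x"
proof (rule nth_equalityI)
  fix i assume "i < length (phi E x)"
  then show "phi E x ! i = phi F x ! i" using assms[of "Suc i"] by (simp add: bit_def)
qed simp

lemma phi_Int_deriv_support:
  assumes "E \<subseteq> {2..length x}"
  shows "phi (E \<inter> deriv_support x) x = phi E x"
  by (rule phi_eqI) (use assms in \<open>auto simp: bit_phi deriv_support_def\<close>)

lemma inj_on_phi: "inj_on (\<lambda>E. phi E x) (Pow (deriv_support x))"
proof (rule inj_onI)
  fix E F assume "E \<in> Pow (deriv_support x)" "F \<in> Pow (deriv_support x)" "phi E x = phi F x"
  moreover have "G = {j \<in> deriv_support x. bit (phi G x) j \<noteq> bit x j}" if "G \<subseteq> deriv_support x" for G
    using that by (auto simp: bit_phi deriv_support_def split: if_splits)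
  ultimately show "E = F" by (metis PowD)
qed

lemma Phi2_eq_image: "Phi 2 x = (\<lambda>E. phi E x) ` nonadj_subsets_le2 (deriv_support x)"
proof (intro equalityI subsetI)
  fix y assume "y \<in> Phi 2 x"
  then obtain E where y: "y = phi E x" and E: "grain_pattern (length x) E" "card E \<le> 2"
    by (auto simp: Phi_def)
  have "E \<subseteq> {2..length x}" using E(1) by (simp add: grain_pattern_def)
  then have "y = phi (E \<inter> deriv_support x) x" and "card (E \<inter> deriv_support x) \<le> 2"
    using y E(2) phi_Int_deriv_support card_mono[of E "E \<inter> deriv_support x"] finite_subset
    by fastforce+
  moreover have "nonadj (E \<inter> deriv_support x)"
    using E(1) by (auto simp: grain_pattern_def nonadj_def)
  ultimately show "y \<in> (\<lambda>E. phi E x) ` nonadj_subsets_le2 (deriv_support x)"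
    by (auto simp: nonadj_subsets_le2_def)
next
  fix y assume "y \<in> (\<lambda>E. phi E x) ` nonadj_subsets_le2 (deriv_support x)"
  then show "y \<in> Phi 2 x"
    using deriv_support_subset[of x]
    by (auto simp: Phi_def nonadj_subsets_le2_def grain_pattern_def nonadj_def)
qed

lemma card_Phi2_filter:
  "card {y \<in> Phi 2 x. Q y} = card {E \<in> nonadj_subsets_le2 (deriv_support x). Q (phi E x)}"
proof -
  have "{y \<in> Phi 2 x. Q y} = (\<lambda>E. phi E x) ` {E \<in> nonadj_subsets_le2 (deriv_support x). Q (phi E x)}"
    unfolding Phi2_eq_image by blast
  moreover have "inj_on (\<lambda>E. phi E x) {E \<in> nonadj_subsets_le2 (deriv_support x). Q (phi E x)}"
    by (rule inj_on_subset[OF inj_on_phi]) (auto simp: nonadj_subsets_le2_def)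
  ultimately show ?thesis by (simp add: card_image)
qed

(* The bit x_(e-1) is copied into position e: this clears x'_e and complements x'_(e+1). *)
lemma deriv_support_phi:
  assumes "E \<subseteq> deriv_support x" and "nonadj E"
  defines "P \<equiv> deriv_support x" and "D \<equiv> run_nonends (deriv_support x)"
  shows "deriv_support (phi E x) = (P - (E \<union> Suc ` (E \<inter> D))) \<union> Suc ` (E - D - {length x})"
proof (rule set_eqI)
  fix j
  have E: "2 \<le> e \<and> e \<le> length x \<and> bit x (e - 1) \<noteq> bit x e" if "e \<in> E" for e
    using that assms(1) by (auto simp: deriv_support_def)
  show "j \<in> deriv_support (phi E x) \<longleftrightarrow> j \<in> (P - (E \<union> Suc ` (E \<inter> D))) \<union> Suc ` (E - D - {length x})"
  proof (cases "2 \<le> j \<and> j \<le> length x")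
    case False
    then show ?thesis using deriv_support_subset E unfolding P_def by fastforce
  next
    case True
    have Suc_image: "j \<in> Suc ` A \<longleftrightarrow> j - 1 \<in> A" for A
      using True by (cases j) auto
    have "Suc (j - 1) = j" using True by simp
    then have "j \<in> E \<Longrightarrow> j - 1 \<notin> E"
      using assms(2) unfolding nonadj_def by metis
    moreover have "bit (phi E x) j = (if j \<in> E then bit x (j - 1) else bit x j)"
      "bit (phi E x) (j - 1) = (if j - 1 \<in> E then bit x (j - 1 - 1) else bit x (j - 1))"
      using True by (intro bit_phi; linarith)+
    ultimately show ?thesis
      using True E[of "j - 1"]
      by (auto simp: Suc_image P_def D_def run_nonends_def deriv_support_def)
  qed
qed

lemma card_deriv_support_phi:
  assumes "E \<subseteq> deriv_support x" and "nonadj E"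
  defines "P \<equiv> deriv_support x" and "D \<equiv> run_nonends (deriv_support x)"
  shows "card (deriv_support (phi E x)) + 2 * card (E \<inter> D) + card (E \<inter> {length x}) = card P"
proof -
  have fin: "finite P" "finite E"
    using finite_deriv_support assms(1) finite_subset unfolding P_def by blast+
  have n_notin_D: "length x \<notin> D"
    using deriv_support_subset[of x] by (auto simp: D_def run_nonends_def)
  have moved_sub: "E \<union> Suc ` (E \<inter> D) \<subseteq> P"
    using assms(1) by (auto simp: P_def D_def run_nonends_def)
  have "card (E \<union> Suc ` (E \<inter> D)) = card E + card (E \<inter> D)"
    using assms(2) fin(2) by (subst card_Un_disjoint) (auto simp: nonadj_def card_image)
  then have c1: "card (P - (E \<union> Suc ` (E \<inter> D))) + card E + card (E \<inter> D) = card P"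
    using card_Diff_subset[OF finite_subset[OF moved_sub fin(1)] moved_sub]
      card_mono[OF fin(1) moved_sub] by simp
  have "card (E - D - {length x}) + card (E \<inter> {length x}) = card (E - D)"
  proof -
    have "(E - D) \<inter> {length x} = E \<inter> {length x}" using n_notin_D by auto
    then show ?thesis using fin(2) card_Int_Diff[of "E - D" "{length x}"] by simp
  qed
  moreover have "card (E \<inter> D) + card (E - D) = card E"
    using card_Int_Diff[OF fin(2)] by simp
  moreover have "(P - (E \<union> Suc ` (E \<inter> D))) \<inter> Suc ` (E - D - {length x}) = {}"
    using assms(1) by (auto simp: P_def D_def run_nonends_def)
  ultimately show ?thesis
    using c1 fin deriv_support_phi[OF assms(1,2)]
    by (simp add: card_Un_disjoint card_image P_def D_def)
qed

lemma card_Phi2_weight_drop: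
  "card {y \<in> Phi 2 x. int (weight (deriv y)) = int (weight (deriv x)) - int c}
    = card {E \<in> nonadj_subsets_le2 (deriv_support x).
        2 * card (E \<inter> run_nonends (deriv_support x)) + card (E \<inter> {length x}) = c}"
  unfolding card_Phi2_filter
proof (intro arg_cong[where f = card] Collect_cong conj_cong refl)
  fix E assume "E \<in> nonadj_subsets_le2 (deriv_support x)"
  then show "int (weight (deriv (phi E x))) = int (weight (deriv x)) - int c
      \<longleftrightarrow> 2 * card (E \<inter> run_nonends (deriv_support x)) + card (E \<inter> {length x}) = c"
    using card_deriv_support_phi[of E x] by (auto simp: nonadj_subsets_le2_def weight_deriv)
qed

lemma card_Int_run_nonends_Int_length_le:
  assumes "E \<in> nonadj_subsets_le2 (deriv_support x)"
  shows "card (E \<inter> run_nonends (deriv_support x)) + card (E \<inter> {length x}) \<le> 2"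
proof -
  have "length x \<notin> run_nonends (deriv_support x)"
    using deriv_support_subset[of x] by (auto simp: run_nonends_def)
  moreover have "finite E" "card E \<le> 2"
    using assms finite_deriv_support finite_subset by (auto simp: nonadj_subsets_le2_def)
  ultimately show ?thesis
    using card_mono[of E "(E \<inter> run_nonends (deriv_support x)) \<union> (E \<inter> {length x})"]
    by (subst card_Un_disjoint[symmetric]) auto
qed

lemma card_Phi2_weight_drop_levels:
  fixes x :: "bool list"
  defines "D \<equiv> run_nonends (deriv_support x)" and "S \<equiv> nonadj_subsets_le2 (deriv_support x)"
    and "A \<equiv> \<lambda>j::int. card {y \<in> Phi 2 x. int (weight (deriv y)) = int (weight (deriv x)) - j}"
  shows "A 0 + A 1 = card {E \<in> S. card (E \<inter> D) = 0}"
    and "A 2 + A 3 = card {E \<in> S. card (E \<inter> D) = 1}"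
    and "A 4 = card {E \<in> S. card (E \<inter> D) = 2}"
proof -
  have A: "A (int c) = card {E \<in> S. 2 * card (E \<inter> D) + card (E \<inter> {length x}) = c}" for c
    unfolding A_def S_def D_def by (rule card_Phi2_weight_drop)
  have "finite S" by (simp add: S_def nonadj_subsets_le2_def finite_deriv_support)
  moreover have "card (E \<inter> {length x}) \<le> 1" for E
    using card_mono[of "{length x}" "E \<inter> {length x}"] by simp
  ultimately have pair: "A (int (2 * j)) + A (int (2 * j + 1)) = card {E \<in> S. card (E \<inter> D) = j}" for j
    unfolding A by (rule card_level_pair)
  show "A 0 + A 1 = card {E \<in> S. card (E \<inter> D) = 0}" using pair[of 0] by simp
  show "A 2 + A 3 = card {E \<in> S. card (E \<inter> D) = 1}" using pair[of 1] by simp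
  have "2 * card (E \<inter> D) + card (E \<inter> {length x}) = 4 \<longleftrightarrow> card (E \<inter> D) = 2" if "E \<in> S" for E
    using card_Int_run_nonends_Int_length_le[of E x] that unfolding S_def D_def by linarith
  then have "{E \<in> S. 2 * card (E \<inter> D) + card (E \<inter> {length x}) = 4} = {E \<in> S. card (E \<inter> D) = 2}"
    by blast
  then show "A 4 = card {E \<in> S. card (E \<inter> D) = 2}" using A[of 4] by simp
qed

theorem lemma4p3:
  fixes x :: "bool list" and n :: nat
  assumes "n \<ge> 1" and "length x = n"
  defines "\<omega> \<equiv> weight (deriv x)"
      and "m \<equiv> num_runs (deriv x)"
      and "m1 \<equiv> num_runs_len1 (deriv x)"
      and "A \<equiv> (\<lambda>j::int. card {y \<in> Phi 2 x. int (weight (deriv y)) = int (weight (deriv x)) - j})"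
  shows "(int (A 0) + int (A 1) = 1 + int m + int (m choose 2))
    \<and> (int (A 2) + int (A 3) = (int \<omega> - int m) * (int m + 1) - (int m - int m1))
    \<and> (int (A 4) = int ((\<omega> - m) choose 2) - (int \<omega> - int m) + (int m - int m1))"
proof -
  define P where "P = deriv_support x"
  define D where "D = run_nonends P"
  define S where "S = nonadj_subsets_le2 P"
  have fin: "finite P" "finite D"
    by (simp_all add: P_def D_def run_nonends_def finite_deriv_support)
  have "A 0 + A 1 = card {E \<in> S. card (E \<inter> D) = 0}"
    "A 2 + A 3 = card {E \<in> S. card (E \<inter> D) = 1}" "A 4 = card {E \<in> S. card (E \<inter> D) = 2}"
    unfolding A_def S_def D_def P_def by (rule card_Phi2_weight_drop_levels)+
  moreover have "card D = card {d \<in> D. Suc d \<in> D} + card {d \<in> D. Suc d \<notin> D}"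
    and "\<omega> = card D + card (P - D)"
    using fin card_Int_Diff[of D "{d. Suc d \<in> D}"] card_Int_Diff[of P D]
    by (simp_all add: \<omega>_def weight_deriv P_def D_def run_nonends_def Int_def set_diff_eq)
  moreover have "m = card (P - D)" "m = m1 + card {d \<in> D. Suc d \<notin> D}"
    unfolding m_def m1_def P_def D_def by (rule num_runs_deriv_eq_card_run_ends num_runs_deriv_split)+
  moreover note card_nonadj_subsets_le2_levels[OF fin(1), folded D_def S_def]
  ultimately have "A 0 + A 1 = 1 + m + (m choose 2)"
    and "int (A 2) + int (A 3) + (int m - int m1) = (int \<omega> - int m) * (int m + 1)"
    and "int (A 4) + (int \<omega> - int m) - (int m - int m1) = int ((\<omega> - m) choose 2)"
    by (simp_all add: algebra_simps flip: of_nat_mult)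
  then show ?thesis by simp
qed

end
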